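(* Let $\delta\ge0$, $R,S\ge1$ and $i_1\in\{1,2,3,4\}$. Then $$\#\big\{\mathbf{x}\in\mathbb{Z}^2_{\mathrm{prim}}:\ \textstyle\prod_iL_i(\mathbf{x})\ne0,\ S\le|\mathbf{x}|<2S,\ R\le|L_{i_1}(\mathbf{x})|<2R,\ \Delta_{\mathrm{bad}}(\mathbf{x})>(SR)^\delta\big\}\ll(SR)^{1-\delta/8},$$ with implied constant depending only on $L_1,\dots,L_4$.
   Context: $L_1,\dots,L_4\in\mathbb{Z}[x_1,x_2]$ are pairwise non-proportional linear forms with coprime coefficients; $|\cdot|$ is the sup norm. For $\mathbf{x}$ with $\prod_iL_i(\mathbf{x})\ne0$, $\Delta_{\mathrm{bad}}(\mathbf{x})=\prod_{p^e\,\|\,L_1(\mathbf{x})\cdots L_4(\mathbf{x}),\ e\ge2}p^e$, the square-full part of $L_1(\mathbf{x})\cdots L_4(\mathbf{x})$. *)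

theory Defs
  imports "HOL-Analysis.Analysis" "HOL-Computational_Algebra.Computational_Algebra"
begin

definition linform :: "(nat \<Rightarrow> int) \<Rightarrow> (nat \<Rightarrow> int) \<Rightarrow> nat \<Rightarrow> int \<times> int \<Rightarrow> int" where
  "linform a b i x = a i * fst x + b i * snd x"

definition supnorm :: "int \<times> int \<Rightarrow> int" where
  "supnorm x = max \<bar>fst x\<bar> \<bar>snd x\<bar>"

definition sqfull_part :: "int \<Rightarrow> nat" where
  "sqfull_part n = (\<Prod>p\<in>prime_factors (nat \<bar>n\<bar>).
      if multiplicity p (nat \<bar>n\<bar>) \<ge> 2 then p ^ multiplicity p (nat \<bar>n\<bar>) else 1)"

definition Delta_bad :: "(nat \<Rightarrow> int) \<Rightarrow> (nat \<Rightarrow> int) \<Rightarrow> int \<times> int \<Rightarrow> nat" where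
  "Delta_bad a b x = sqfull_part (\<Prod>i\<in>{1..4}. linform a b i x)"

end

theory Submission
  imports Defs
begin

text \<open>
  If a prime power divides two of the forms \<open>L_i(x), L_k(x)\<close> at a primitive point \<open>x\<close>, it
  divides the determinant \<open>a_i b_k - a_k b_i\<close>. Hence \<open>\<Delta>_bad(x) \<le> K \<Prod>_i sf(L_i(x))\<close>, where \<open>sf\<close>
  is the square-full part and \<open>K\<close> depends only on the forms, so \<open>\<Delta>_bad(x) > T\<close> forces
  \<open>sf(L_j(x)) \<ge> U = (T/K)^(1/4)\<close> for some \<open>j\<close>. Writing \<open>sf(L_j(x)) = A^2 B^3\<close>, the point \<open>x\<close>
  lies in the box and satisfies \<open>A^2 B^3 dvd L_j(x)\<close>; as \<open>x \<mapsto> (L_j(x), L_k(x))\<close> is injective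
  for \<open>j \<noteq> k\<close>, there are \<open>O(SR/(A^2 B^3))\<close> such points. Summing over \<open>A^2 B^3 \<ge> U\<close> costs a
  factor \<open>O(U^(-1/2))\<close>, which is \<open>O((SR)^(-\<delta>/8))\<close> for \<open>T = (SR)^\<delta>\<close>.
\<close>

definition squarefull_part :: "nat \<Rightarrow> nat" where
  "squarefull_part n =
     (\<Prod>p\<in>prime_factors n. p ^ (if 2 \<le> multiplicity p n then multiplicity p n else 0))"

lemma sqfull_part_eq_squarefull_part: "sqfull_part n = squarefull_part (nat \<bar>n\<bar>)"
  unfolding sqfull_part_def squarefull_part_def by (intro prod.cong) auto

lemma multiplicity_squarefull_part:
  assumes "prime p"
  shows "multiplicity p (squarefull_part n) =
           (if 2 \<le> multiplicity p n then multiplicity p n else 0)"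
proof -
  have "multiplicity p (squarefull_part n) = (if p \<in> prime_factors n then
      (if 2 \<le> multiplicity p n then multiplicity p n else 0) else 0)"
    unfolding squarefull_part_def
    by (rule multiplicity_prod_prime_powers) (auto simp: in_prime_factors_imp_prime assms)
  then show ?thesis
    using assms prime_factors_multiplicity[of n] by auto
qed

lemma squarefull_part_pos: "squarefull_part n > 0"
  unfolding squarefull_part_def
  by (intro prod_pos) (auto simp: prime_gt_0_nat in_prime_factors_imp_prime)

lemma squarefull_part_dvd: "squarefull_part n dvd n"
proof (cases "n = 0")
  case False
  then show ?thesis
    using squarefull_part_pos[of n]
    by (intro multiplicity_le_imp_dvd) (auto simp: multiplicity_squarefull_part)
qed simp

text \<open>Every exponent \<open>e \<ge> 2\<close> is a sum \<open>2g + 3h\<close> with \<open>h \<in> {0,1}\<close>.\<close>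
lemma squarefull_part_square_cube:
  obtains A B where "A \<ge> 1" "B \<ge> 1" "squarefull_part n = A\<^sup>2 * B ^ 3"
proof -
  define e where "e p = (if 2 \<le> multiplicity p n then multiplicity p n else 0)" for p
  define h where "h p = (if odd (e p) then 1 else 0 :: nat)" for p
  define g where "g p = (e p - 3 * h p) div 2" for p
  have e_eq: "e p = 2 * g p + 3 * h p" for p
    unfolding g_def h_def e_def by (auto elim!: oddE)
  have "squarefull_part n = (\<Prod>p\<in>prime_factors n. p ^ (2 * g p + 3 * h p))"
    unfolding squarefull_part_def e_eq[symmetric] e_def ..
  also have "\<dots> = (\<Prod>p\<in>prime_factors n. p ^ g p)\<^sup>2 * (\<Prod>p\<in>prime_factors n. p ^ h p) ^ 3"
    by (simp add: power_add power_mult prod.distrib prod_power_distrib[symmetric] mult.commute)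
  finally show ?thesis
    by (rule that[rotated 2]) (auto intro!: prod_ge_1 simp: in_prime_factors_imp_prime prime_gt_0_nat Suc_le_eq)
qed

lemma squarefull_exponent_sum_le:
  fixes e :: "'i \<Rightarrow> nat"
  assumes "finite I" and pairwise: "\<And>i k. i \<in> I \<Longrightarrow> k \<in> I \<Longrightarrow> i \<noteq> k \<Longrightarrow> min (e i) (e k) \<le> w"
  shows "(if 2 \<le> sum e I then sum e I else 0) \<le>
           (\<Sum>i\<in>I. if 2 \<le> e i then e i else 0) + card I * w"
proof (cases "\<forall>i\<in>I. e i \<le> w")
  case True
  then have "sum e I \<le> card I * w" using sum_bounded_above[of I e w] by simp
  then show ?thesis by auto
next
  case False
  then obtain i0 where i0: "i0 \<in> I" "w < e i0" by (auto simp: not_le)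
  have small: "e k \<le> w" if "k \<in> I - {i0}" for k
    using pairwise[of i0 k] that i0 by auto
  have "sum e (I - {i0}) \<le> card (I - {i0}) * w"
    using sum_bounded_above[of "I - {i0}" e w] small by simp
  also have "\<dots> \<le> card I * w"
    by (intro mult_le_mono1 card_Diff1_le)
  finally have rest: "sum e (I - {i0}) \<le> card I * w" .
  have split: "sum e I = e i0 + sum e (I - {i0})"
    using assms(1) i0(1) by (simp add: sum.remove)
  show ?thesis
  proof (cases "2 \<le> e i0")
    case True
    have "e i0 \<le> (\<Sum>i\<in>I. if 2 \<le> e i then e i else 0)"
      using member_le_sum[of i0 I "\<lambda>i. if 2 \<le> e i then e i else 0"] assms(1) i0(1) True by auto
    then show ?thesis using split rest by auto
  next
    case False
    then have "w = 0" using i0(2) by simp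
    then have "sum e I = e i0" using split small by (simp add: sum_nonneg_eq_0_iff assms(1))
    then show ?thesis using False by simp
  qed
qed

lemma squarefull_part_prod_dvd:
  fixes l :: "'i \<Rightarrow> nat"
  assumes "finite I" "\<And>i. i \<in> I \<Longrightarrow> l i \<noteq> 0" "r \<noteq> 0"
    and gcd_dvd: "\<And>i k. i \<in> I \<Longrightarrow> k \<in> I \<Longrightarrow> i \<noteq> k \<Longrightarrow> gcd (l i) (l k) dvd r"
  shows "squarefull_part (\<Prod>i\<in>I. l i) dvd (\<Prod>i\<in>I. squarefull_part (l i)) * r ^ card I"
proof (rule multiplicity_le_imp_dvd)
  show "squarefull_part (\<Prod>i\<in>I. l i) \<noteq> 0" using squarefull_part_pos by (metis less_irrefl)
next
  fix p :: nat assume p: "prime p"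
  then have pe: "prime_elem p" by simp
  have nz: "0 \<notin> l ` I" "0 \<notin> (\<lambda>i. squarefull_part (l i)) ` I"
    using assms(2) squarefull_part_pos by (auto simp: image_iff)
  have "min (multiplicity p (l i)) (multiplicity p (l k)) \<le> multiplicity p r"
    if "i \<in> I" "k \<in> I" "i \<noteq> k" for i k
    using gcd_dvd[OF that] multiplicity_gcd[of "l i" "l k" p] assms(2,3) that p
    by (metis dvd_imp_multiplicity_le)
  then have "(if 2 \<le> (\<Sum>i\<in>I. multiplicity p (l i)) then \<Sum>i\<in>I. multiplicity p (l i) else 0)
      \<le> (\<Sum>i\<in>I. if 2 \<le> multiplicity p (l i) then multiplicity p (l i) else 0)
         + card I * multiplicity p r"
    by (rule squarefull_exponent_sum_le[OF assms(1)])
  then show "multiplicity p (squarefull_part (\<Prod>i\<in>I. l i)) \<le>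
      multiplicity p ((\<Prod>i\<in>I. squarefull_part (l i)) * r ^ card I)"
    using nz assms(1,3) squarefull_part_pos
    by (simp add: multiplicity_squarefull_part[OF p] prime_elem_multiplicity_prod_distrib[OF pe]
        prime_elem_multiplicity_mult_distrib[OF pe] prime_elem_multiplicity_power_distrib[OF pe]
        split: if_split_asm)
qed

lemma pow_card_less_prodE:
  fixes f :: "'i \<Rightarrow> real"
  assumes "finite I" "\<And>i. i \<in> I \<Longrightarrow> 0 \<le> f i" "c ^ card I < (\<Prod>i\<in>I. f i)"
  obtains i where "i \<in> I" "c < f i"
proof (rule ccontr)
  assume "\<not> thesis"
  with that have "f i \<le> c" if "i \<in> I" for i using that by force
  then have "(\<Prod>i\<in>I. f i) \<le> (\<Prod>i\<in>I. c)" using assms(2) by (intro prod_mono) auto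
  with assms(3) show False by simp
qed

lemma common_divisor_linform_dvd_det:
  fixes d :: int
  assumes "coprime (fst x) (snd x)" "d dvd linform a b j x" "d dvd linform a b k x"
  shows "d dvd a j * b k - a k * b j"
proof -
  obtain x1 x2 where x: "x = (x1, x2)" by (cases x)
  let ?D = "a j * b k - a k * b j"
  have "b k * linform a b j x - b j * linform a b k x = ?D * x1"
       "a j * linform a b k x - a k * linform a b j x = ?D * x2"
    unfolding linform_def x by (simp_all add: algebra_simps)
  then have "d dvd ?D * x1" "d dvd ?D * x2"
    using assms(2,3) by (metis dvd_diff dvd_mult)+
  then have "d dvd gcd (?D * x1) (?D * x2)" by simp
  also have "gcd (?D * x1) (?D * x2) = \<bar>?D\<bar>"
    using assms(1) x by (simp add: gcd_mult_distrib_int[symmetric])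
  finally show ?thesis by simp
qed

lemma inj_linform_pair:
  assumes "a j * b k \<noteq> a k * b j"
  shows "inj (\<lambda>x. (linform a b j x, linform a b k x))"
proof (rule injI)
  fix x y assume eq: "(linform a b j x, linform a b k x) = (linform a b j y, linform a b k y)"
  define d1 where "d1 = fst x - fst y"
  define d2 where "d2 = snd x - snd y"
  have "a j * d1 + b j * d2 = 0" "a k * d1 + b k * d2 = 0"
    using eq unfolding linform_def d1_def d2_def by (auto simp: algebra_simps)
  moreover have "(a j * b k - a k * b j) * d1 = b k * (a j * d1 + b j * d2) - b j * (a k * d1 + b k * d2)"
    "(a j * b k - a k * b j) * d2 = a j * (a k * d1 + b k * d2) - a k * (a j * d1 + b j * d2)"
    by (simp_all add: algebra_simps)
  ultimately have "(a j * b k - a k * b j) * d1 = 0" "(a j * b k - a k * b j) * d2 = 0"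
    by simp_all
  then have "d1 = 0" "d2 = 0" using assms by simp_all
  then show "x = y" unfolding d1_def d2_def by (simp add: prod_eq_iff)
qed

definition linform_det_prod :: "(nat \<Rightarrow> int) \<Rightarrow> (nat \<Rightarrow> int) \<Rightarrow> int" where
  "linform_det_prod a b =
     (\<Prod>(i, k) \<in> {1..4} \<times> {1..4} - Id. a i * b k - a k * b i)"

lemma linform_det_prod_nonzero:
  assumes "\<forall>i\<in>{1..4}. \<forall>j\<in>{1..4}. i \<noteq> j \<longrightarrow> a i * b j \<noteq> a j * b i"
  shows "linform_det_prod a b \<noteq> 0"
  using assms unfolding linform_det_prod_def by (subst prod_zero_iff) auto

lemma det_dvd_linform_det_prod:
  assumes "i \<in> {1..4}" "k \<in> {1..4}" "i \<noteq> k"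
  shows "a i * b k - a k * b i dvd linform_det_prod a b"
  using dvd_prodI[of "{1..4} \<times> {1..4} - Id" "(i, k)" "\<lambda>(i, k). a i * b k - a k * b i"] assms
  unfolding linform_det_prod_def by simp

lemma Delta_bad_le:
  assumes np: "\<forall>i\<in>{1..4}. \<forall>j\<in>{1..4}. i \<noteq> j \<longrightarrow> a i * b j \<noteq> a j * b i"
    and prim: "coprime (fst x) (snd x)" and nonzero: "(\<Prod>i\<in>{1..4}. linform a b i x) \<noteq> 0"
  shows "Delta_bad a b x \<le>
           (\<Prod>i\<in>{1..4}. sqfull_part (linform a b i x)) * nat \<bar>linform_det_prod a b\<bar> ^ 4"
proof -
  define l where "l i = nat \<bar>linform a b i x\<bar>" for i
  define r where "r = nat \<bar>linform_det_prod a b\<bar>"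
  have l: "l i \<noteq> 0" if "i \<in> {1..4}" for i
    using nonzero that unfolding l_def by (auto simp: prod_zero_iff)
  have r: "r \<noteq> 0" using linform_det_prod_nonzero[OF np] unfolding r_def by simp
  have "gcd (l i) (l k) dvd r" if "i \<in> {1..4}" "k \<in> {1..4}" "i \<noteq> k" for i k
  proof -
    have "gcd (linform a b i x) (linform a b k x) dvd a i * b k - a k * b i"
      by (rule common_divisor_linform_dvd_det[OF prim]) auto
    also have "\<dots> dvd linform_det_prod a b" by (rule det_dvd_linform_det_prod[OF that])
    finally have "int (gcd (l i) (l k)) dvd int r"
      unfolding l_def r_def gcd_int_def by simp
    then show ?thesis by simp
  qed
  then have "squarefull_part (\<Prod>i\<in>{1..4}. l i) dvd (\<Prod>i\<in>{1..4}. squarefull_part (l i)) * r ^ 4"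
    using squarefull_part_prod_dvd[of "{1..4::nat}" l r] l r by simp
  then have "squarefull_part (\<Prod>i\<in>{1..4}. l i) \<le> (\<Prod>i\<in>{1..4}. squarefull_part (l i)) * r ^ 4"
    using r squarefull_part_pos by (intro dvd_imp_le) auto
  moreover have "int (\<Prod>i\<in>{1..4}. l i) = \<bar>\<Prod>i\<in>{1..4}. linform a b i x\<bar>"
    unfolding l_def of_nat_prod abs_prod by simp
  ultimately show ?thesis
    unfolding Delta_bad_def sqfull_part_eq_squarefull_part l_def r_def
    by (metis nat_int)
qed

definition coeff_bound :: "(nat \<Rightarrow> int) \<Rightarrow> (nat \<Rightarrow> int) \<Rightarrow> int" where
  "coeff_bound a b = 1 + (\<Sum>i\<in>{1..4}. \<bar>a i\<bar> + \<bar>b i\<bar>)"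

lemma coeff_bound_ge_1: "1 \<le> coeff_bound a b"
  unfolding coeff_bound_def by (simp add: sum_nonneg)

lemma abs_linform_le:
  assumes "i \<in> {1..4}"
  shows "\<bar>linform a b i x\<bar> \<le> coeff_bound a b * supnorm x"
proof -
  have x: "\<bar>fst x\<bar> \<le> supnorm x" "\<bar>snd x\<bar> \<le> supnorm x" unfolding supnorm_def by auto
  have "\<bar>linform a b i x\<bar> \<le> \<bar>a i\<bar> * \<bar>fst x\<bar> + \<bar>b i\<bar> * \<bar>snd x\<bar>"
    unfolding linform_def by (metis abs_mult abs_triangle_ineq)
  also have "\<dots> \<le> (\<bar>a i\<bar> + \<bar>b i\<bar>) * supnorm x"
    using x by (simp add: distrib_right add_mono mult_left_mono)
  also have "\<dots> \<le> coeff_bound a b * supnorm x"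
    using member_le_sum[of i "{1..4}" "\<lambda>i. \<bar>a i\<bar> + \<bar>b i\<bar>"] assms x
    unfolding coeff_bound_def by (intro mult_right_mono) auto
  finally show ?thesis .
qed

lemma card_multiples_le:
  fixes q :: int and N :: real
  assumes "1 \<le> q" "0 \<le> N"
  shows "finite {u. q dvd u \<and> \<bar>real_of_int u\<bar> \<le> N} \<and>
         real (card {u. q dvd u \<and> \<bar>real_of_int u\<bar> \<le> N}) \<le> 2 * N / q + 1"
proof -
  define m where "m = \<lfloor>N / q\<rfloor>"
  have sub: "{u. q dvd u \<and> \<bar>real_of_int u\<bar> \<le> N} \<subseteq> (\<lambda>t. q * t) ` {-m..m}"
  proof
    fix u assume "u \<in> {u. q dvd u \<and> \<bar>real_of_int u\<bar> \<le> N}"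
    then obtain t where u: "u = q * t" and "real_of_int q * \<bar>real_of_int t\<bar> \<le> N"
      using assms(1) by (auto simp: abs_mult elim!: dvdE)
    then have "\<bar>real_of_int t\<bar> \<le> N / q" using assms(1) by (simp add: field_simps)
    then have "\<bar>t\<bar> \<le> m" unfolding m_def by linarith
    then have "t \<in> {-m..m}" by auto
    with u show "u \<in> (\<lambda>t. q * t) ` {-m..m}" by blast
  qed
  then have fin: "finite {u. q dvd u \<and> \<bar>real_of_int u\<bar> \<le> N}"
    using finite_subset by blast
  have "card {u. q dvd u \<and> \<bar>real_of_int u\<bar> \<le> N} \<le> card ((\<lambda>t. q * t) ` {-m..m})"
    using sub by (intro card_mono) auto
  also have "\<dots> \<le> card {-m..m}" by (rule card_image_le) simp
  finally have "real (card {u. q dvd u \<and> \<bar>real_of_int u\<bar> \<le> N}) \<le> real (card {-m..m})"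
    by simp
  also have "\<dots> \<le> 2 * N / q + 1"
  proof -
    have "0 \<le> m" "real_of_int m \<le> N / q" unfolding m_def using assms by simp_all
    then show ?thesis by simp
  qed
  finally show ?thesis using fin by simp
qed

lemma finite_card_le_box:
  fixes f :: "'a \<Rightarrow> int \<times> int" and q :: nat and A B :: real
  assumes "inj_on f X" "1 \<le> q" "0 \<le> A" "0 \<le> B"
    and "f ` X \<subseteq> {u. int q dvd u \<and> \<bar>real_of_int u\<bar> \<le> A} \<times> {v. \<bar>real_of_int v\<bar> \<le> B}"
  shows "finite X \<and> real (card X) \<le> (2 * A / q + 1) * (2 * B + 1)"
proof -
  let ?U = "{u. int q dvd u \<and> \<bar>real_of_int u\<bar> \<le> A}" and ?V = "{v. 1 dvd v \<and> \<bar>real_of_int v\<bar> \<le> B}"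
  have U: "finite ?U" "real (card ?U) \<le> 2 * A / q + 1" using card_multiples_le[of "int q" A] assms(2,3) by auto
  have V: "finite ?V" "real (card ?V) \<le> 2 * B + 1" using card_multiples_le[of 1 B] assms(4) by auto
  have sub: "f ` X \<subseteq> ?U \<times> ?V" using assms(5) by auto
  then have "finite (f ` X)" using U(1) V(1) finite_subset by blast
  then have fin: "finite X" using assms(1) finite_imageD by blast
  have "card X = card (f ` X)" using assms(1) by (simp add: card_image)
  also have "\<dots> \<le> card ?U * card ?V" using sub U(1) V(1) by (metis card_cartesian_product card_mono finite_SigmaI)
  finally have "real (card X) \<le> real (card ?U) * real (card ?V)" by (metis of_nat_le_iff of_nat_mult)
  also have "\<dots> \<le> (2 * A / q + 1) * (2 * B + 1)" using U V by (intro mult_mono) auto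
  finally show ?thesis using fin by simp
qed

lemma finite_card_le_linform_box:
  fixes q :: nat and A B :: real
  assumes "a j * b k \<noteq> a k * b j" "1 \<le> q" "0 \<le> A" "0 \<le> B"
    and "\<And>x. x \<in> X \<Longrightarrow> int q dvd linform a b j x \<and>
           \<bar>real_of_int (linform a b j x)\<bar> \<le> A \<and> \<bar>real_of_int (linform a b k x)\<bar> \<le> B"
  shows "finite X \<and> real (card X) \<le> (2 * A / q + 1) * (2 * B + 1)"
proof (rule finite_card_le_box)
  show "inj_on (\<lambda>x. (linform a b j x, linform a b k x)) X"
    using inj_linform_pair[OF assms(1)] by (rule inj_on_subset) simp
qed (use assms(2-5) in auto)

lemma abs_linform_le_box:
  assumes "i \<in> {1..4}" "real_of_int (supnorm x) < 2 * S"
  shows "\<bar>real_of_int (linform a b i x)\<bar> \<le> 2 * real_of_int (coeff_bound a b) * S"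
proof -
  have "\<bar>real_of_int (linform a b i x)\<bar> \<le> real_of_int (coeff_bound a b) * real_of_int (supnorm x)"
    using abs_linform_le[OF assms(1), of a b x] by (metis of_int_abs of_int_le_iff of_int_mult)
  also have "\<dots> \<le> real_of_int (coeff_bound a b) * (2 * S)"
    using assms(2) coeff_bound_ge_1[of a b] by (intro mult_left_mono) auto
  finally show ?thesis by simp
qed

lemma affine_product_le:
  fixes \<alpha> \<beta> :: real
  assumes "1 \<le> 2 * \<alpha>" "1 \<le> \<beta>"
  shows "(4 * \<alpha> + 1) * (4 * \<beta> + 1) \<le> 30 * \<alpha> * \<beta>"
proof -
  have "(4 * \<alpha> + 1) * (4 * \<beta> + 1) \<le> (6 * \<alpha>) * (5 * \<beta>)" using assms by (intro mult_mono) auto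
  then show ?thesis by simp
qed

definition dvd_points ::
    "(nat \<Rightarrow> int) \<Rightarrow> (nat \<Rightarrow> int) \<Rightarrow> nat \<Rightarrow> nat \<Rightarrow> nat \<Rightarrow> real \<Rightarrow> real \<Rightarrow> (int \<times> int) set" where
  "dvd_points a b i1 j q S R = {x. real_of_int (supnorm x) < 2 * S \<and>
     R \<le> real_of_int \<bar>linform a b i1 x\<bar> \<and> real_of_int \<bar>linform a b i1 x\<bar> < 2 * R \<and>
     int q dvd linform a b j x}"

lemma card_dvd_points_le:
  fixes a b :: "nat \<Rightarrow> int"
  defines "M \<equiv> real_of_int (coeff_bound a b)"
  assumes np: "\<forall>i\<in>{1..4}. \<forall>j\<in>{1..4}. i \<noteq> j \<longrightarrow> a i * b j \<noteq> a j * b i"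
    and i1: "i1 \<in> {1..4}" and j: "j \<in> {1..4}"
    and q: "1 \<le> q" "real q \<le> 2 * M * S" and S: "1 \<le> S" and R: "1 \<le> R"
  shows "finite (dvd_points a b i1 j q S R) \<and>
         real (card (dvd_points a b i1 j q S R)) \<le> 30 * M * S * R / q"
proof -
  let ?X = "dvd_points a b i1 j q S R"
  have M: "1 \<le> M" unfolding M_def using coeff_bound_ge_1[of a b] by simp
  show ?thesis
  proof (cases "j = i1")
    case False
    have "finite ?X \<and> real (card ?X) \<le> (2 * (2 * M * S) / q + 1) * (2 * (2 * R) + 1)"
      using np[rule_format, OF j i1 False] q(1) M S R abs_linform_le_box[OF j]
      by (intro finite_card_le_linform_box) (auto simp: dvd_points_def M_def)
    then have fin: "finite ?X" and card: "real (card ?X) \<le> (4 * (M * S / q) + 1) * (4 * R + 1)"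
      by simp_all
    note card
    also have "(4 * (M * S / q) + 1) * (4 * R + 1) \<le> 30 * (M * S / q) * R"
      using q R by (intro affine_product_le) (simp_all add: field_simps)
    finally show ?thesis using fin by simp
  next
    case True
    define k :: nat where "k = (if i1 = 1 then 2 else 1)"
    have k: "k \<in> {1..4}" "i1 \<noteq> k" unfolding k_def by auto
    show ?thesis
    proof (cases "?X = {}")
      case False
      then obtain x where "x \<in> ?X" by blast
      then have L: "int q dvd linform a b i1 x" "R \<le> real_of_int \<bar>linform a b i1 x\<bar>"
        "real_of_int \<bar>linform a b i1 x\<bar> < 2 * R"
        using True unfolding dvd_points_def by simp_all
      then have "\<bar>int q\<bar> \<le> \<bar>linform a b i1 x\<bar>"
        using R by (intro dvd_imp_le_int) auto
      then have "real q < 2 * R"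
        using L(3) by (metis abs_of_nat of_int_le_iff of_int_of_nat_eq order.strict_trans1)
      have "finite ?X \<and> real (card ?X) \<le> (2 * (2 * R) / q + 1) * (2 * (2 * M * S) + 1)"
        using np[rule_format, OF i1 k] q(1) M S R abs_linform_le_box[OF k(1)] True
        by (intro finite_card_le_linform_box) (auto simp: dvd_points_def M_def)
      then have fin: "finite ?X" and card: "real (card ?X) \<le> (4 * (R / q) + 1) * (4 * (M * S) + 1)"
        by simp_all
      note card
      also have "(4 * (R / q) + 1) * (4 * (M * S) + 1) \<le> 30 * (R / q) * (M * S)"
        using \<open>real q < 2 * R\<close> q(1) mult_mono[of 1 M 1 S] M S
        by (intro affine_product_le) (simp_all add: field_simps)
      finally show ?thesis using fin by (simp add: ac_simps)
    qed (use M S R in simp)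
  qed
qed

lemma sum_le_telescope:
  fixes f g :: "nat \<Rightarrow> real"
  assumes "\<And>k. m \<le> k \<Longrightarrow> f k \<le> g k - g (Suc k)" "\<And>k. m \<le> k \<Longrightarrow> 0 \<le> g k"
  shows "(\<Sum>k=m..N. f k) \<le> g m"
proof (cases "m \<le> N")
  case True
  have "(\<Sum>k=m..N. f k) \<le> (\<Sum>k=m..N. g k - g (Suc k))" by (intro sum_mono assms(1)) auto
  also have "\<dots> = g m - g (Suc N)"
    using sum_Suc_diff[of m N "\<lambda>k. - g k"] True by (simp add: sum_negf[symmetric])
  finally show ?thesis using assms(2)[of "Suc N"] True by simp
next
  case False
  then show ?thesis using assms(2)[of m] by simp
qed

lemma sum_inverse_squares_le:
  assumes "1 \<le> m"
  shows "(\<Sum>A=m..N. 1 / real A ^ 2) \<le> 2 / real m"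
proof -
  have "(\<Sum>A=m..N. 1 / real A ^ 2) \<le> 2 / (2 * real m - 1)"
  proof (rule sum_le_telescope[where g = "\<lambda>k. 2 / (2 * real k - 1)"])
    fix k assume "m \<le> k"
    then have k: "1 \<le> real k" using assms by simp
    then have "1 \<le> real k ^ 2" by simp
    then have "1 / real k ^ 2 \<le> 4 / (4 * real k ^ 2 - 1)" by (simp add: divide_simps)
    also have "\<dots> = 2 / (2 * real k - 1) - 2 / (2 * real (Suc k) - 1)"
      using k by (simp add: field_simps power2_eq_square)
    finally show "1 / real k ^ 2 \<le> 2 / (2 * real k - 1) - 2 / (2 * real (Suc k) - 1)" .
    show "0 \<le> 2 / (2 * real k - 1)" using k by simp
  qed
  also have "\<dots> \<le> 2 / real m" using assms by (intro divide_left_mono) auto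
  finally show ?thesis .
qed

lemma sum_inverse_squares_above_le:
  assumes "0 < t"
  shows "(\<Sum>A=1..N. if t \<le> real A ^ 2 then 1 / real A ^ 2 else 0) \<le> 2 / sqrt t"
proof -
  define m where "m = max 1 (nat \<lceil>sqrt t\<rceil>)"
  have m: "1 \<le> m" "sqrt t \<le> real m" unfolding m_def by linarith+
  have "{1..N} \<inter> {A. t \<le> real A ^ 2} \<subseteq> {m..N}"
  proof
    fix A assume "A \<in> {1..N} \<inter> {A. t \<le> real A ^ 2}"
    then have "A \<in> {1..N}" "sqrt t \<le> real A" using real_sqrt_le_mono[of t "real A ^ 2"] by auto
    then show "A \<in> {m..N}" unfolding m_def by auto
  qed
  then have "(\<Sum>A\<in>{1..N} \<inter> {A. t \<le> real A ^ 2}. 1 / real A ^ 2) \<le> (\<Sum>A=m..N. 1 / real A ^ 2)"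
    by (intro sum_mono2) auto
  then have "(\<Sum>A=1..N. if t \<le> real A ^ 2 then 1 / real A ^ 2 else 0) \<le> (\<Sum>A=m..N. 1 / real A ^ 2)"
    by (simp only: sum.inter_restrict finite_atLeastAtMost mem_Collect_eq)
  also have "\<dots> \<le> 2 / real m" by (rule sum_inverse_squares_le[OF m(1)])
  also have "\<dots> \<le> 2 / sqrt t" using m assms by (intro divide_left_mono) auto
  finally show ?thesis .
qed

lemma inverse_three_halves_le_diff:
  fixes n :: real
  assumes "1 \<le> n"
  shows "1 / ((n + 1) * sqrt (n + 1)) \<le> 2 / sqrt n - 2 / sqrt (n + 1)"
proof -
  define x y where "x = sqrt n" and "y = sqrt (n + 1)"
  have x: "1 \<le> x" and xy: "x \<le> y" and y2: "y\<^sup>2 = x\<^sup>2 + 1"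
    using assms unfolding x_def y_def by auto
  have "(y - x) * (x + y) = 1" using y2 by (simp add: algebra_simps power2_eq_square)
  then have yx: "y - x = 1 / (x + y)" using x xy by (simp add: eq_divide_eq)
  have "x * y * (x + y) \<le> y * y * (y + y)" using x xy by (intro mult_mono) auto
  then have "x * y * (x + y) \<le> 2 * y ^ 3" by (simp add: power3_eq_cube algebra_simps)
  then have "2 / (2 * y ^ 3) \<le> 2 / (x * y * (x + y))"
    using x xy by (intro divide_left_mono) auto
  then have "1 / y ^ 3 \<le> 2 / (x * y * (x + y))" by simp
  also have "\<dots> = 2 * (y - x) / (x * y)" unfolding yx by (simp add: ac_simps)
  also have "\<dots> = 2 / x - 2 / y" using x xy by (simp add: field_simps)
  finally show ?thesis
    using assms unfolding x_def y_def by (simp add: power3_eq_cube)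
qed

lemma sum_inverse_three_halves_le: "(\<Sum>B=1..N. 1 / (real B * sqrt (real B))) \<le> 3"
proof (cases "N = 0")
  case False
  have "(\<Sum>B=2..N. 1 / (real B * sqrt (real B))) \<le> 2 / sqrt (real 2 - 1)"
  proof (rule sum_le_telescope[where g = "\<lambda>k. 2 / sqrt (real k - 1)"])
    fix k :: nat assume "2 \<le> k"
    then show "1 / (real k * sqrt (real k)) \<le> 2 / sqrt (real k - 1) - 2 / sqrt (real (Suc k) - 1)"
      using inverse_three_halves_le_diff[of "real k - 1"] by simp
  qed simp
  then show ?thesis using False by (simp add: sum.atLeast_Suc_atMost numeral_2_eq_2)
qed simp

lemma sum_inverse_square_cube_le:
  assumes "0 < U"
  shows "(\<Sum>(A, B) \<in> {(A, B) \<in> {1..N} \<times> {1..N}. U \<le> real A ^ 2 * real B ^ 3}.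
            1 / (real A ^ 2 * real B ^ 3)) \<le> 6 / sqrt U"
proof -
  have inner: "(\<Sum>A=1..N. if U \<le> real A ^ 2 * real B ^ 3 then 1 / (real A ^ 2 * real B ^ 3) else 0)
      \<le> 2 / sqrt U * (1 / (real B * sqrt (real B)))" if "B \<in> {1..N}" for B
  proof -
    define c where "c = real B ^ 3"
    have c: "0 < c" using that unfolding c_def by simp
    have "(\<Sum>A=1..N. if U \<le> real A ^ 2 * real B ^ 3 then 1 / (real A ^ 2 * real B ^ 3) else 0)
        = 1 / c * (\<Sum>A=1..N. if U / c \<le> real A ^ 2 then 1 / real A ^ 2 else 0)"
      unfolding sum_distrib_left c_def[symmetric] using c by (intro sum.cong) (auto simp: field_simps)
    also have "\<dots> \<le> 1 / c * (2 / sqrt (U / c))"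
      using c assms by (intro mult_left_mono sum_inverse_squares_above_le) auto
    also have "\<dots> = 2 / sqrt U * (1 / sqrt c)"
      using c assms by (simp add: real_sqrt_divide field_simps)
    also have "sqrt c = real B * sqrt (real B)"
      unfolding c_def by (simp add: power3_eq_cube real_sqrt_mult)
    finally show ?thesis .
  qed
  have filter: "(\<Sum>(A, B) \<in> {(A, B) \<in> X. P A B}. f A B) = (\<Sum>(A, B) \<in> X. if P A B then f A B else 0)"
    if "finite X" for X :: "(nat \<times> nat) set" and P and f :: "nat \<Rightarrow> nat \<Rightarrow> real"
    using that by (simp add: sum.inter_filter[symmetric] case_prod_unfold)
  have swap: "(\<Sum>(A, B) \<in> {1..N} \<times> {1..N}. g A B) = (\<Sum>B=1..N. \<Sum>A=1..N. g A B)"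
    for g :: "nat \<Rightarrow> nat \<Rightarrow> real"
    by (subst sum.swap) (simp add: sum.cartesian_product)
  have "(\<Sum>(A, B) \<in> {(A, B) \<in> {1..N} \<times> {1..N}. U \<le> real A ^ 2 * real B ^ 3}.
            1 / (real A ^ 2 * real B ^ 3))
      = (\<Sum>B=1..N. \<Sum>A=1..N. if U \<le> real A ^ 2 * real B ^ 3 then 1 / (real A ^ 2 * real B ^ 3) else 0)"
    unfolding filter[OF finite_cartesian_product[OF finite_atLeastAtMost finite_atLeastAtMost]] swap ..
  also have "\<dots> \<le> (\<Sum>B=1..N. 2 / sqrt U * (1 / (real B * sqrt (real B))))"
    by (rule sum_mono) (rule inner)
  also have "\<dots> \<le> 2 / sqrt U * 3"
    unfolding sum_distrib_left[symmetric] using assms by (intro mult_left_mono sum_inverse_three_halves_le) auto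
  finally show ?thesis by simp
qed

definition bad_points :: "(nat \<Rightarrow> int) \<Rightarrow> (nat \<Rightarrow> int) \<Rightarrow> nat \<Rightarrow> real \<Rightarrow> real \<Rightarrow> real \<Rightarrow> (int \<times> int) set" where
  "bad_points a b i1 S R T = {x :: int \<times> int. gcd (fst x) (snd x) = 1 \<and>
     (\<Prod>i\<in>{1..4}. linform a b i x) \<noteq> 0 \<and>
     S \<le> real_of_int (supnorm x) \<and> real_of_int (supnorm x) < 2 * S \<and>
     R \<le> real_of_int \<bar>linform a b i1 x\<bar> \<and> real_of_int \<bar>linform a b i1 x\<bar> < 2 * R \<and>
     real (Delta_bad a b x) > T}"

definition square_cube_pairs :: "real \<Rightarrow> nat \<Rightarrow> (nat \<times> nat) set" where
  "square_cube_pairs U N =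
     {(A, B) \<in> {1..N} \<times> {1..N}. U \<le> real A ^ 2 * real B ^ 3 \<and> A ^ 2 * B ^ 3 \<le> N}"

lemma large_sqfull_part_linform:
  fixes a b :: "nat \<Rightarrow> int"
  defines "K \<equiv> real (nat \<bar>linform_det_prod a b\<bar> ^ 4)"
  assumes np: "\<forall>i\<in>{1..4}. \<forall>j\<in>{1..4}. i \<noteq> j \<longrightarrow> a i * b j \<noteq> a j * b i"
    and prim: "coprime (fst x) (snd x)" and nonzero: "(\<Prod>i\<in>{1..4}. linform a b i x) \<noteq> 0"
    and "0 \<le> T" and large: "T < real (Delta_bad a b x)"
  obtains j where "j \<in> {1..4}" "(T / K) powr (1/4) < real (sqfull_part (linform a b j x))"
proof -
  define s where "s i = real (sqfull_part (linform a b i x))" for i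
  have K: "0 < K" unfolding K_def using linform_det_prod_nonzero[OF np] by simp
  have "T < (\<Prod>i\<in>{1..4}. s i) * K"
    using large Delta_bad_le[OF np prim nonzero] unfolding s_def K_def
    by (metis of_nat_le_iff of_nat_mult of_nat_prod order.strict_trans2)
  moreover have "((T / K) powr (1/4)) ^ card {1..4::nat} = T / K"
    using \<open>0 \<le> T\<close> K by (cases "T = 0") (simp_all add: powr_power)
  ultimately have "((T / K) powr (1/4)) ^ card {1..4::nat} < (\<Prod>i\<in>{1..4}. s i)"
    using K by (simp add: divide_less_eq)
  then show ?thesis
    by (rule pow_card_less_prodE[rotated 2]) (auto simp: s_def intro: that)
qed

lemma bad_points_subset_Union_dvd_points:
  fixes a b :: "nat \<Rightarrow> int"
  defines "M \<equiv> real_of_int (coeff_bound a b)" and "K \<equiv> real (nat \<bar>linform_det_prod a b\<bar> ^ 4)"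
  assumes np: "\<forall>i\<in>{1..4}. \<forall>j\<in>{1..4}. i \<noteq> j \<longrightarrow> a i * b j \<noteq> a j * b i" and "0 \<le> T"
  shows "bad_points a b i1 S R T \<subseteq>
           (\<Union>j\<in>{1..4}. \<Union>(A, B) \<in> square_cube_pairs ((T / K) powr (1/4)) (nat \<lfloor>2 * M * S\<rfloor>).
              dvd_points a b i1 j (A ^ 2 * B ^ 3) S R)"
proof
  fix x assume x: "x \<in> bad_points a b i1 S R T"
  then have prim: "coprime (fst x) (snd x)" and nonzero: "(\<Prod>i\<in>{1..4}. linform a b i x) \<noteq> 0"
    and norm: "real_of_int (supnorm x) < 2 * S" and large: "T < real (Delta_bad a b x)"
    unfolding bad_points_def by (auto simp: coprime_iff_gcd_eq_1)
  define U where "U = (T / K) powr (1/4)"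
  obtain j where j: "j \<in> {1..4}" and "U < real (sqfull_part (linform a b j x))"
    using large_sqfull_part_linform[OF np prim nonzero \<open>0 \<le> T\<close> large] unfolding U_def K_def .
  obtain A B where AB: "1 \<le> A" "1 \<le> B" "squarefull_part (nat \<bar>linform a b j x\<bar>) = A ^ 2 * B ^ 3"
    by (rule squarefull_part_square_cube)
  let ?q = "A ^ 2 * B ^ 3"
  have "?q dvd nat \<bar>linform a b j x\<bar>" using AB(3) squarefull_part_dvd by metis
  then have dvd: "int ?q dvd linform a b j x" by (simp only: dvd_nat_abs_iff)
  have "linform a b j x \<noteq> 0" using nonzero j by (auto simp: prod_zero_iff)
  with dvd have "real ?q \<le> \<bar>real_of_int (linform a b j x)\<bar>"
    by (metis dvd_imp_le_int abs_of_nat of_int_abs of_int_le_iff of_int_of_nat_eq)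
  also have "\<dots> \<le> 2 * M * S" using abs_linform_le_box[OF j norm] unfolding M_def .
  finally have "?q \<le> nat \<lfloor>2 * M * S\<rfloor>" by linarith
  moreover have "A \<le> ?q" "B \<le> ?q" using AB(1,2)
    by (simp_all add: power2_eq_square power3_eq_cube Suc_le_eq)
  moreover have "U \<le> real A ^ 2 * real B ^ 3"
    using \<open>U < real (sqfull_part (linform a b j x))\<close> AB(3) by (simp add: sqfull_part_eq_squarefull_part)
  ultimately have "(A, B) \<in> square_cube_pairs U (nat \<lfloor>2 * M * S\<rfloor>)"
    using AB(1,2) unfolding square_cube_pairs_def by auto
  moreover have "x \<in> dvd_points a b i1 j ?q S R"
    using x dvd unfolding bad_points_def dvd_points_def by auto
  ultimately show "x \<in> (\<Union>j\<in>{1..4}. \<Union>(A, B) \<in> square_cube_pairs U (nat \<lfloor>2 * M * S\<rfloor>).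
      dvd_points a b i1 j (A ^ 2 * B ^ 3) S R)"
    using j by blast
qed

lemma finite_square_cube_pairs: "finite (square_cube_pairs U N)"
  unfolding square_cube_pairs_def by (rule finite_subset[of _ "{1..N} \<times> {1..N}"]) auto

lemma card_bad_points_le_sum:
  fixes a b :: "nat \<Rightarrow> int"
  defines "M \<equiv> real_of_int (coeff_bound a b)" and "K \<equiv> real (nat \<bar>linform_det_prod a b\<bar> ^ 4)"
  assumes np: "\<forall>i\<in>{1..4}. \<forall>j\<in>{1..4}. i \<noteq> j \<longrightarrow> a i * b j \<noteq> a j * b i"
    and i1: "i1 \<in> {1..4}" and S: "1 \<le> S" and R: "1 \<le> R" and T: "0 \<le> T"
  shows "real (card (bad_points a b i1 S R T)) \<le> 120 * M * S * R *
           (\<Sum>(A, B) \<in> square_cube_pairs ((T / K) powr (1/4)) (nat \<lfloor>2 * M * S\<rfloor>).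
              1 / (real A ^ 2 * real B ^ 3))"
proof -
  define P where "P = square_cube_pairs ((T / K) powr (1/4)) (nat \<lfloor>2 * M * S\<rfloor>)"
  define X where "X j A B = dvd_points a b i1 j (A ^ 2 * B ^ 3) S R" for j A B
  have finP: "finite P" unfolding P_def by (rule finite_square_cube_pairs)
  have X: "finite (X j A B) \<and> real (card (X j A B)) \<le> 30 * M * S * R * (1 / (real A ^ 2 * real B ^ 3))"
    if "j \<in> {1..4}" "(A, B) \<in> P" for j A B
  proof -
    have "1 \<le> A ^ 2 * B ^ 3" "A ^ 2 * B ^ 3 \<le> nat \<lfloor>2 * M * S\<rfloor>"
      using that(2) unfolding P_def square_cube_pairs_def by auto
    then have "1 \<le> A ^ 2 * B ^ 3" "real (A ^ 2 * B ^ 3) \<le> 2 * M * S" by linarith+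
    from card_dvd_points_le[OF np i1 that(1) this[unfolded M_def] S R] show ?thesis
      unfolding X_def M_def by simp
  qed
  have "bad_points a b i1 S R T \<subseteq> (\<Union>j\<in>{1..4}. \<Union>(A, B)\<in>P. X j A B)"
    using bad_points_subset_Union_dvd_points[OF np T, of i1 S R] unfolding P_def X_def M_def K_def .
  moreover have "finite (\<Union>j\<in>{1..4}. \<Union>(A, B)\<in>P. X j A B)"
    using X finP by (intro finite_UN_I) (auto split: prod.splits)
  ultimately have "card (bad_points a b i1 S R T) \<le> card (\<Union>j\<in>{1..4}. \<Union>(A, B)\<in>P. X j A B)"
    by (intro card_mono)
  also have "\<dots> \<le> (\<Sum>j\<in>{1..4}. card (\<Union>(A, B)\<in>P. X j A B))" by (rule card_UN_le) simp
  also have "\<dots> \<le> (\<Sum>j\<in>{1..4}. \<Sum>(A, B)\<in>P. card (X j A B))"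
  proof (rule sum_mono)
    show "card (\<Union>(A, B)\<in>P. X j A B) \<le> (\<Sum>(A, B)\<in>P. card (X j A B))" for j
      using card_UN_le[OF finP, of "\<lambda>(A, B). X j A B"] by (simp add: prod.case_distrib)
  qed
  finally have "real (card (bad_points a b i1 S R T)) \<le> real (\<Sum>j\<in>{1..4}. \<Sum>(A, B)\<in>P. card (X j A B))"
    by (simp only: of_nat_le_iff)
  also have "\<dots> = (\<Sum>j\<in>{1..4}. \<Sum>(A, B)\<in>P. real (card (X j A B)))"
    by (simp add: case_prod_unfold)
  also have "\<dots> \<le> (\<Sum>j\<in>{1..4::nat}. \<Sum>(A, B)\<in>P. 30 * M * S * R * (1 / (real A ^ 2 * real B ^ 3)))"
    using X by (intro sum_mono) (auto simp: case_prod_unfold)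
  also have "\<dots> = 120 * M * S * R * (\<Sum>(A, B)\<in>P. 1 / (real A ^ 2 * real B ^ 3))"
    by (simp add: sum_distrib_left case_prod_unfold mult.assoc)
  finally show ?thesis unfolding P_def .
qed

lemma card_bad_points_le:
  fixes a b :: "nat \<Rightarrow> int"
  defines "M \<equiv> real_of_int (coeff_bound a b)" and "K \<equiv> real (nat \<bar>linform_det_prod a b\<bar> ^ 4)"
  assumes np: "\<forall>i\<in>{1..4}. \<forall>j\<in>{1..4}. i \<noteq> j \<longrightarrow> a i * b j \<noteq> a j * b i"
    and i1: "i1 \<in> {1..4}" and S: "1 \<le> S" and R: "1 \<le> R" and T: "0 < T"
  shows "real (card (bad_points a b i1 S R T)) \<le> 720 * M * S * R * (K / T) powr (1/8)"
proof -
  define U where "U = (T / K) powr (1/4)"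
  define N where "N = nat \<lfloor>2 * M * S\<rfloor>"
  have K: "0 < K" unfolding K_def using linform_det_prod_nonzero[OF np] by simp
  have "square_cube_pairs U N \<subseteq> {(A, B) \<in> {1..N} \<times> {1..N}. U \<le> real A ^ 2 * real B ^ 3}"
    unfolding square_cube_pairs_def by auto
  then have "(\<Sum>(A, B) \<in> square_cube_pairs U N. 1 / (real A ^ 2 * real B ^ 3)) \<le> 6 / sqrt U"
    using K T unfolding U_def
    by (intro sum_mono2 order_trans[OF _ sum_inverse_square_cube_le] finite_subset[OF _ finite_SigmaI])
      auto
  moreover have "real (card (bad_points a b i1 S R T)) \<le>
      120 * M * S * R * (\<Sum>(A, B) \<in> square_cube_pairs U N. 1 / (real A ^ 2 * real B ^ 3))"
    using card_bad_points_le_sum[OF np i1 S R less_imp_le[OF T]] unfolding U_def N_def M_def K_def .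
  moreover have "0 \<le> 120 * M * S * R" using coeff_bound_ge_1[of a b] S R unfolding M_def by simp
  ultimately have "real (card (bad_points a b i1 S R T)) \<le> 120 * M * S * R * (6 / sqrt U)"
    by (meson mult_left_mono order_trans)
  also have "sqrt U = (T / K) powr (1/8)"
    unfolding U_def using T K by (simp add: powr_half_sqrt[symmetric] powr_powr)
  finally show ?thesis using T K by (simp add: powr_divide)
qed

lemma card_bad_points_powr_le:
  fixes a b :: "nat \<Rightarrow> int"
  defines "M \<equiv> real_of_int (coeff_bound a b)" and "K \<equiv> real (nat \<bar>linform_det_prod a b\<bar> ^ 4)"
  assumes np: "\<forall>i\<in>{1..4}. \<forall>j\<in>{1..4}. i \<noteq> j \<longrightarrow> a i * b j \<noteq> a j * b i"
    and i1: "i1 \<in> {1..4}" and S: "1 \<le> S" and R: "1 \<le> R"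
  shows "real (card (bad_points a b i1 S R ((S * R) powr \<delta>))) \<le> 720 * M * K * (S * R) powr (1 - \<delta> / 8)"
proof -
  have M: "1 \<le> M" unfolding M_def using coeff_bound_ge_1[of a b] by simp
  have "0 < nat \<bar>linform_det_prod a b\<bar> ^ 4" using linform_det_prod_nonzero[OF np] by simp
  then have K: "1 \<le> K" unfolding K_def by linarith
  have SR: "1 \<le> S * R" using mult_mono[of 1 S 1 R] S R by simp
  have "real (card (bad_points a b i1 S R ((S * R) powr \<delta>)))
      \<le> 720 * M * (S * R) * (K / (S * R) powr \<delta>) powr (1/8)"
    using card_bad_points_le[OF np i1 S R, where T = "(S * R) powr \<delta>"] SR S R
    unfolding M_def K_def by (simp add: ac_simps)
  also have "\<dots> = 720 * M * K powr (1/8) * ((S * R) / (S * R) powr (\<delta> / 8))"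
    using SR K by (simp add: powr_divide powr_powr)
  also have "\<dots> \<le> 720 * M * K * ((S * R) / (S * R) powr (\<delta> / 8))"
    using powr_mono[of "1/8" 1 K] SR K M by (intro mult_right_mono mult_left_mono) auto
  also have "\<dots> = 720 * M * K * (S * R) powr (1 - \<delta> / 8)"
    using SR by (simp add: powr_diff)
  finally show ?thesis .
qed

theorem lemma5p9:
  fixes a b :: "nat \<Rightarrow> int"
  assumes coprime_coeffs: "\<forall>i\<in>{1..4}. gcd (a i) (b i) = 1"
    and non_proportional: "\<forall>i\<in>{1..4}. \<forall>j\<in>{1..4}. i \<noteq> j \<longrightarrow> a i * b j \<noteq> a j * b i"
  shows "\<exists>C>0. \<forall>(\<delta>::real) (R::real) (S::real) (i1::nat).
           \<delta> \<ge> 0 \<longrightarrow> R \<ge> 1 \<longrightarrow> S \<ge> 1 \<longrightarrow> i1 \<in> {1..4} \<longrightarrow>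
           real (card {x :: int \<times> int. gcd (fst x) (snd x) = 1 \<and>
                   (\<Prod>i\<in>{1..4}. linform a b i x) \<noteq> 0 \<and>
                   S \<le> real_of_int (supnorm x) \<and> real_of_int (supnorm x) < 2 * S \<and>
                   R \<le> real_of_int \<bar>linform a b i1 x\<bar> \<and> real_of_int \<bar>linform a b i1 x\<bar> < 2 * R \<and>
                   real (Delta_bad a b x) > (S * R) powr \<delta>})
             \<le> C * (S * R) powr (1 - \<delta> / 8)"
proof -
  have "0 < 720 * real_of_int (coeff_bound a b) * real (nat \<bar>linform_det_prod a b\<bar> ^ 4)"
    using coeff_bound_ge_1[of a b] linform_det_prod_nonzero[OF non_proportional] by simp
  with card_bad_points_powr_le[OF non_proportional] show ?thesis
    unfolding bad_points_def by blast
qed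

end
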